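(* Let $M\in\mathcal{G}$. In the bosonic case, $C_M=\frac12(M-JMJ)$ is always invertible. In the fermionic case, $C_M$ is invertible if and only if $\Delta_{M^{-1}}=-M^{-1}JMJ$ has no eigenvalue equal to $-1$.
   Context: Bosonic case: $V=\mathbb{R}^{2N}$ with symplectic form $\Omega=\begin{pmatrix}0&\mathbb{1}\\-\mathbb{1}&0\end{pmatrix}$, $\mathcal{G}=\mathrm{Sp}(2N,\mathbb{R})=\{M\in\mathrm{SL}(2N,\mathbb{R}):M\Omega M^\intercal=\Omega\}$, and $J$ a real linear map with $J^2=-\mathbb{1}$, $J\Omega J^\intercal=\Omega$, $-J\Omega$ positive definite. Fermionic case: $V=\mathbb{R}^{2N}$ with metric $G=\mathbb{1}$, $\mathcal{G}=\mathrm{SO}(2N,\mathbb{R})$, $J$ real with $J^2=-\mathbb{1}$ and $JGJ^\intercal=G$. *)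

theory Defs
  imports "HOL-Analysis.Analysis"
begin

text \<open>Phase space V = R^{2N}, indexed by the type 'n + 'n (first N = positions,
  last N = momenta), so CARD('n) = N.\<close>

type_synonym ('n) sqmat = "real ^ ('n + 'n) ^ ('n + 'n)"

definition Omega :: "('n::finite) sqmat" where
  "Omega = (\<chi> i j. (case (i, j) of
              (Inl a, Inr b) \<Rightarrow> (if a = b then 1 else 0)
            | (Inr a, Inl b) \<Rightarrow> (if a = b then -1 else 0)
            | _ \<Rightarrow> 0))"

definition symplectic_group :: "('n::finite) sqmat set" where
  "symplectic_group = {M. det M = 1 \<and> M ** Omega ** transpose M = Omega}"

definition special_orthogonal_group :: "('n::finite) sqmat set" where
  "special_orthogonal_group = {M. det M = 1 \<and> M ** mat 1 ** transpose M = mat 1}"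

definition pos_def :: "('n::finite) sqmat \<Rightarrow> bool" where
  "pos_def A \<longleftrightarrow> transpose A = A \<and> (\<forall>x. x \<noteq> 0 \<longrightarrow> x \<bullet> (A *v x) > 0)"

definition bosonic_J :: "('n::finite) sqmat \<Rightarrow> bool" where
  "bosonic_J J \<longleftrightarrow> J ** J = - mat 1 \<and> J ** Omega ** transpose J = Omega
      \<and> pos_def (- (J ** Omega))"

definition fermionic_J :: "('n::finite) sqmat \<Rightarrow> bool" where
  "fermionic_J J \<longleftrightarrow> J ** J = - mat 1 \<and> J ** mat 1 ** transpose J = mat 1"

definition C_mat :: "('n::finite) sqmat \<Rightarrow> 'n sqmat \<Rightarrow> 'n sqmat" where
  "C_mat J M = (1/2) *\<^sub>R (M - J ** M ** J)"

definition Delta_mat :: "('n::finite) sqmat \<Rightarrow> 'n sqmat \<Rightarrow> 'n sqmat" where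
  "Delta_mat J M = - (M ** J ** matrix_inv M ** J)"

definition has_eigenvalue :: "('n::finite) sqmat \<Rightarrow> real \<Rightarrow> bool" where
  "has_eigenvalue A c \<longleftrightarrow> (\<exists>v. v \<noteq> 0 \<and> A *v v = c *\<^sub>R v)"

end

theory Submission
  imports Defs
begin

(* Bosonic case: write g x = x . (-J Omega) x. Compatibility J Omega J^T = Omega together with
   J^2 = -1 gives Omega J^T = -J Omega. If y lies in the kernel of (M - J M J)^T, then with
   z = M^T J^T y one has M^T y = J^T z, and M Omega M^T = Omega yields g y = -g z; positivity of g
   forces y = 0.

   Fermionic case: M is orthogonal, so M^-1 = M^T and Delta_(M^-1) = -M^T J M J. Hence
   M v = J M J v iff Delta_(M^-1) v = -v, for any matrix J. *)

lemma invertible_iff_ker_trivial: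
  fixes A :: "'a::field^'n^'n"
  shows "invertible A \<longleftrightarrow> (\<forall>x. A *v x = 0 \<longrightarrow> x = 0)"
  using invertible_left_inverse matrix_left_invertible_ker by blast

lemma invertible_iff_left_ker_trivial:
  fixes A :: "real^'n^'n"
  shows "invertible A \<longleftrightarrow> (\<forall>x. x v* A = 0 \<longrightarrow> x = 0)"
  by (metis invertible_iff_ker_trivial transpose_invertible transpose_matrix_vector
      transpose_transpose)

lemma matrix_inv_eqI:
  fixes A B :: "'a::field^'n^'n"
  assumes "A ** B = mat 1"
  shows "matrix_inv A = B"
proof -
  have "A ** matrix_inv A = mat 1 \<and> matrix_inv A ** A = mat 1"
    unfolding matrix_inv_def
    by (rule someI[of _ B]) (use assms matrix_left_right_inverse in blast)
  then show ?thesis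
    by (metis assms matrix_mul_assoc matrix_mul_lid)
qed

lemma orthogonal_matrix_inv:
  fixes Q :: "real^'n^'n"
  assumes "orthogonal_matrix Q"
  shows "matrix_inv Q = transpose Q"
  using assms unfolding orthogonal_matrix_def by (auto intro: matrix_inv_eqI)

lemma vector_matrix_mult_diff_distrib:
  fixes A B :: "'a::comm_ring_1^'n^'m"
  shows "x v* (A - B) = x v* A - x v* B"
  by (simp add: vector_matrix_mult_def vec_eq_iff sum_subtractf algebra_simps)

lemma matrix_mul_uminus_left:
  fixes A :: "'a::ring_1^'n^'m"
  shows "(- A) ** B = - (A ** B)"
  by (simp add: matrix_matrix_mult_def vec_eq_iff sum_negf)

lemma matrix_vector_mult_uminus_left:
  fixes A :: "'a::ring_1^'n^'m"
  shows "(- A) *v x = - (A *v x)"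
  by (simp add: matrix_vector_mult_def vec_eq_iff sum_negf)

lemma invertible_diff_conj_compatible_complex_structure:
  fixes J \<Omega> M :: "real^'n^'n"
  assumes J_sq: "J ** J = - mat 1"
    and J_\<Omega>: "J ** \<Omega> ** transpose J = \<Omega>"
    and M_\<Omega>: "M ** \<Omega> ** transpose M = \<Omega>"
    and pos: "\<And>x. x \<noteq> 0 \<Longrightarrow> 0 < x \<bullet> (- (J ** \<Omega>) *v x)"
  shows "invertible (M - J ** M ** J)"
  unfolding invertible_iff_left_ker_trivial
proof (intro allI impI)
  fix y
  assume "y v* (M - J ** M ** J) = 0"
  then have fixed: "y v* M = ((y v* J) v* M) v* J"
    by (simp add: vector_matrix_mult_diff_distrib vector_matrix_mul_assoc)
  have \<Omega>_J: "\<Omega> ** transpose J = - (J ** \<Omega>)"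
  proof -
    have "J ** \<Omega> = J ** (J ** \<Omega> ** transpose J)"
      using J_\<Omega> by simp
    also have "\<dots> = - (\<Omega> ** transpose J)"
      by (simp add: J_sq matrix_mul_assoc matrix_mul_uminus_left)
    finally show ?thesis by simp
  qed
  define q where "q x = x \<bullet> (- (J ** \<Omega>) *v x)" for x
  have q_nonneg: "0 \<le> q x" for x
    using pos[of x] by (cases "x = 0") (simp_all add: q_def)
  define z where "z = (y v* J) v* M"
  have "q y = y \<bullet> (M *v (\<Omega> *v z))"
  proof -
    have "q y = y \<bullet> (\<Omega> *v (y v* J))"
      unfolding q_def \<Omega>_J[symmetric] by (simp add: matrix_vector_mul_assoc[symmetric])
    also have "\<dots> = y \<bullet> ((M ** \<Omega> ** transpose M) *v (y v* J))"
      using M_\<Omega> by simp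
    finally show ?thesis
      unfolding z_def by (simp add: matrix_vector_mul_assoc[symmetric])
  qed
  also have "\<dots> = (z v* J) \<bullet> (\<Omega> *v z)"
    by (metis dot_lmul_matrix fixed z_def)
  also have "\<dots> = - q z"
    unfolding q_def
    by (simp add: dot_lmul_matrix matrix_vector_mul_assoc matrix_vector_mult_uminus_left)
  finally have "q y = - q z" .
  then have "\<not> 0 < q y"
    using q_nonneg[of z] by linarith
  then show "y = 0"
    using pos unfolding q_def by blast
qed

lemma orthogonal_diff_conj_kernel_iff:
  fixes J Q :: "real^'n^'n"
  assumes "orthogonal_matrix Q"
  shows "(Q - J ** Q ** J) *v v = 0 \<longleftrightarrow> (transpose Q ** J ** Q ** J) *v v = v"
proof -
  have Q_Qt: "Q ** transpose Q = mat 1" and "transpose Q ** Q = mat 1"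
    using assms unfolding orthogonal_matrix_def by auto
  then have "invertible Q"
    unfolding invertible_def by blast
  have "(Q - J ** Q ** J) *v v = Q *v (v - (transpose Q ** J ** Q ** J) *v v)"
    by (simp add: matrix_vector_mult_diff_distrib matrix_vector_mult_diff_rdistrib
        matrix_vector_mul_assoc matrix_mul_assoc Q_Qt del: transpose_matrix_vector)
  then show ?thesis
    using \<open>invertible Q\<close> by (auto simp: invertible_iff_ker_trivial)
qed

lemma C_mat_kernel_iff: "C_mat J M *v v = 0 \<longleftrightarrow> (M - J ** M ** J) *v v = 0"
  by (simp add: C_mat_def scaleR_matrix_vector_assoc[symmetric])

lemma special_orthogonal_group_orthogonal:
  "M \<in> special_orthogonal_group \<Longrightarrow> orthogonal_matrix M"
  by (simp add: special_orthogonal_group_def orthogonal_matrix_def matrix_left_right_inverse)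

lemma bosonic_C_mat_invertible:
  assumes "bosonic_J J" and "M \<in> symplectic_group"
  shows "invertible (C_mat J M)"
proof -
  have "invertible (M - J ** M ** J)"
    using assms unfolding bosonic_J_def pos_def_def symplectic_group_def
    by (intro invertible_diff_conj_compatible_complex_structure) auto
  then show ?thesis
    unfolding C_mat_def by (simp add: scalar_invertible)
qed

lemma C_mat_invertible_iff_Delta_mat:
  assumes "M \<in> special_orthogonal_group"
  shows "invertible (C_mat J M) \<longleftrightarrow> \<not> has_eigenvalue (Delta_mat J (matrix_inv M)) (-1)"
proof -
  have M: "orthogonal_matrix M"
    using assms by (rule special_orthogonal_group_orthogonal)
  then have "Delta_mat J (matrix_inv M) = - (transpose M ** J ** M ** J)"
    by (simp add: Delta_mat_def orthogonal_matrix_inv)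
  then show ?thesis
    unfolding invertible_iff_ker_trivial has_eigenvalue_def C_mat_kernel_iff
      orthogonal_diff_conj_kernel_iff[OF M]
    by (auto simp: matrix_vector_mult_uminus_left)
qed

theorem lemma1:
  fixes J M Jf Mf :: "('n::finite) sqmat"
  shows "(bosonic_J J \<and> M \<in> symplectic_group \<longrightarrow> invertible (C_mat J M))
       \<and> (fermionic_J Jf \<and> Mf \<in> special_orthogonal_group \<longrightarrow>
            (invertible (C_mat Jf Mf) \<longleftrightarrow> \<not> has_eigenvalue (Delta_mat Jf (matrix_inv Mf)) (-1)))"
  using bosonic_C_mat_invertible C_mat_invertible_iff_Delta_mat by blast

end
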